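(* Let $\gamma_{ab}$, $h_{ab}$ be real symmetric invertible $2\times2$ matrices with $a_1=\gamma_{ab}h^{ba}$, $a_2=\gamma_{ab}h^{bc}\gamma_{cd}h^{da}$, and $\gamma=|\det\gamma_{ab}|$. (i) (Diffeomorphism-invariant case.) Let $\mathcal{L}=\sqrt{\gamma}\,f(a_1,a_2)$ with $f$ continuously differentiable. If $\partial\mathcal{L}/\partial h^{ij}=0$ and $\partial f/\partial a_1\neq0$, then $h_{ab}=\phi\gamma_{ab}$ where $\phi$ is a root of the $\gamma$-independent equation $$\phi=-2\,\frac{\partial f/\partial a_2}{\partial f/\partial a_1}\Bigg|_{a_1=2\phi^{-1},\ a_2=2\phi^{-2}},$$ and the Lagrangian evaluates to $\mathcal{L}=c\sqrt{\gamma}$ with $c=f(2\phi^{-1},2\phi^{-2})$. (ii) (Diffeomorphism–Weyl-invariant case.) Let $\mathcal{L}=\sqrt{\gamma}\,f(a_2/a_1^2)$ with $f$ continuously differentiable. Then for every nonzero real $\phi$, $h_{ab}=\phi\gamma_{ab}$ satisfies $\partial\mathcal{L}/\partial h^{ij}=0$, and at any such $h$ the Lagrangian equals $f(\tfrac12)\sqrt{\gamma}$. Moreover, if $a_1\neq0$ and $f'(a_2/a_1^2)\neq0$, every solution of $\partial\mathcal{L}/\partial h^{ij}=0$ is of the form $h_{ab}=\phi\gamma_{ab}$ with $\phi\neq0$.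
   Context: $h^{ab}$ denotes the inverse of $h_{ab}$; derivatives with respect to $h^{ij}$ are taken with $\gamma_{ab}$ fixed, using $\partial a_1/\partial h^{ij}=\gamma_{ji}$ and $\partial a_2/\partial h^{ij}=2\gamma_{ja}h^{ab}\gamma_{bi}$. *)

theory Defs
  imports "HOL-Analysis.Analysis"
begin

text \<open>Real 2x2 matrices are \<open>real^2^2\<close>. The argument \<open>H\<close> below plays the role of
  the inverse matrix h^{ab}; gamma is held fixed.\<close>

definition a1 :: "real^2^2 \<Rightarrow> real^2^2 \<Rightarrow> real" where
  "a1 \<gamma> H = trace (\<gamma> ** H)"

definition a2 :: "real^2^2 \<Rightarrow> real^2^2 \<Rightarrow> real" where
  "a2 \<gamma> H = trace (\<gamma> ** H ** \<gamma> ** H)"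

definition emat :: "2 \<Rightarrow> 2 \<Rightarrow> real^2^2" where
  "emat i j = (\<chi> k l. if k = i \<and> l = j then 1 else 0)"

definition stationary :: "(real^2^2 \<Rightarrow> real) \<Rightarrow> real^2^2 \<Rightarrow> bool" where
  "stationary L H \<longleftrightarrow>
     (\<forall>i j. ((\<lambda>t. L (H + t *\<^sub>R emat i j)) has_real_derivative 0) (at 0))"

definition LagD :: "(real \<Rightarrow> real \<Rightarrow> real) \<Rightarrow> real^2^2 \<Rightarrow> real^2^2 \<Rightarrow> real" where
  "LagD f \<gamma> H = sqrt \<bar>det \<gamma>\<bar> * f (a1 \<gamma> H) (a2 \<gamma> H)"

definition LagDW :: "(real \<Rightarrow> real) \<Rightarrow> real^2^2 \<Rightarrow> real^2^2 \<Rightarrow> real" where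
  "LagDW f \<gamma> H = sqrt \<bar>det \<gamma>\<bar> * f (a2 \<gamma> H / (a1 \<gamma> H)^2)"

end

theory Submission imports Defs begin

text \<open>Moving the entry \<open>H\<^sub>i\<^sub>j\<close> of \<open>H = h\<^sup>-\<^sup>1\<close> changes \<open>a1 = tr(\<gamma>H)\<close> at rate \<open>\<gamma>\<^sub>j\<^sub>i\<close> and
  \<open>a2 = tr(\<gamma>H\<gamma>H)\<close> at rate \<open>2(\<gamma>H\<gamma>)\<^sub>j\<^sub>i\<close>, so stationarity of either Lagrangian is a linear
  relation between the matrices \<open>\<gamma>\<close> and \<open>\<gamma>H\<gamma>\<close>. Once it forces \<open>\<gamma>H\<gamma> = c\<gamma>\<close>, invertibility
  gives \<open>\<gamma>H = c\<close>, i.e. \<open>h = c\<^sup>-\<^sup>1\<gamma>\<close>. For \<open>h = \<phi>\<gamma>\<close> one has \<open>a1 = 2/\<phi>\<close> and \<open>a2 = 2/\<phi>\<^sup>2\<close>: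
  in the first case this turns \<open>c\<close> into the self-consistency equation for \<open>\<phi>\<close>; in the
  Weyl-invariant case \<open>a2/a1\<^sup>2 = 1/2\<close> for every \<open>\<phi>\<close>, and the Euler-Lagrange relation
  \<open>\<gamma>H\<gamma> = (a2/a1)\<gamma>\<close> holds identically.\<close>

lemma matrix_inv_right:
  fixes A :: "'a::semiring_1^'n^'n"
  assumes "invertible A"
  shows "A ** matrix_inv A = mat 1"
  using someI_ex[OF assms[unfolded invertible_def]] unfolding matrix_inv_def by blast

lemma matrix_inv_left:
  fixes A :: "'a::semiring_1^'n^'n"
  assumes "invertible A"
  shows "matrix_inv A ** A = mat 1"
  using someI_ex[OF assms[unfolded invertible_def]] unfolding matrix_inv_def by blast

lemma matrix_inv_unique:
  fixes A B :: "'a::semiring_1^'n^'n"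
  assumes "A ** B = mat 1" and "B ** A = mat 1"
  shows "matrix_inv A = B"
proof -
  have "invertible A" using assms unfolding invertible_def by blast
  have "matrix_inv A = (matrix_inv A ** A) ** B"
    by (simp add: assms(1) matrix_mul_assoc[symmetric])
  also have "\<dots> = B" by (simp add: matrix_inv_left[OF \<open>invertible A\<close>])
  finally show ?thesis .
qed

lemma matrix_inv_scaleR:
  fixes A :: "real^'n^'n"
  assumes "k \<noteq> 0" and "invertible A"
  shows "matrix_inv (k *\<^sub>R A) = inverse k *\<^sub>R matrix_inv A"
  by (rule matrix_inv_unique)
    (simp_all add: assms matrix_scalar_ac scalar_matrix_assoc[symmetric]
      matrix_inv_left matrix_inv_right)

lemma matrix_add_rdistrib:
  fixes A B C :: "'a::semiring_1^'n^'n"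
  shows "(A + B) ** C = A ** C + B ** C"
  by (vector matrix_matrix_mult_def sum.distrib[symmetric] field_simps)

lemma trace_scaleR: "trace (c *\<^sub>R (A::real^'n^'n)) = c * trace A"
  by (simp add: trace_def sum_distrib_left)

lemma invertible_nonzero:
  fixes A :: "real^'n^'n"
  assumes "invertible A"
  shows "A \<noteq> 0"
proof
  assume "A = 0"
  then have "(mat 1 :: real^'n^'n) = 0" using matrix_inv_right[OF assms] by simp
  then have "(mat 1 :: real^'n^'n) $ i $ i = 0" for i by simp
  then show False by (simp add: mat_def)
qed

lemma proportional_if_sandwich_scaleR:
  fixes \<gamma> h :: "real^'n^'n"
  assumes "invertible \<gamma>" and "invertible h" and "\<gamma> ** matrix_inv h ** \<gamma> = c *\<^sub>R \<gamma>"
  shows "c \<noteq> 0 \<and> h = inverse c *\<^sub>R \<gamma>"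
proof -
  have "\<gamma> ** matrix_inv h = \<gamma> ** matrix_inv h ** (\<gamma> ** matrix_inv \<gamma>)"
    by (simp add: matrix_inv_right[OF assms(1)])
  also have "\<dots> = (c *\<^sub>R \<gamma>) ** matrix_inv \<gamma>"
    by (simp add: matrix_mul_assoc assms(3))
  also have "\<dots> = c *\<^sub>R mat 1"
    by (simp add: scalar_matrix_assoc[symmetric] matrix_inv_right[OF assms(1)])
  finally have "\<gamma> ** matrix_inv h = c *\<^sub>R mat 1" .
  then have "\<gamma> ** (matrix_inv h ** h) = c *\<^sub>R h"
    by (simp add: matrix_mul_assoc scalar_matrix_assoc[symmetric])
  then have "\<gamma> = c *\<^sub>R h" by (simp add: matrix_inv_left[OF assms(2)])
  moreover have "c \<noteq> 0"
    using \<open>\<gamma> = c *\<^sub>R h\<close> invertible_nonzero[OF assms(1)] by auto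
  ultimately show ?thesis by simp
qed

lemma matrix_mult_matrix_inv_scaleR:
  fixes \<gamma> :: "real^'n^'n"
  assumes "\<phi> \<noteq> 0" and "invertible \<gamma>"
  shows "\<gamma> ** matrix_inv (\<phi> *\<^sub>R \<gamma>) = inverse \<phi> *\<^sub>R mat 1"
  by (simp add: matrix_inv_scaleR assms matrix_scalar_ac scalar_matrix_assoc[symmetric] matrix_inv_right)

lemma trace_matrix_mult_emat: "trace ((M::real^2^2) ** emat i j) = M $ j $ i"
  using exhaust_2[of i] exhaust_2[of j]
  by (auto simp: trace_def matrix_matrix_mult_def emat_def sum_2)

lemma a1_add_emat: "a1 \<gamma> (H + t *\<^sub>R emat i j) = a1 \<gamma> H + t * \<gamma> $ j $ i"
  unfolding a1_def
  by (simp add: matrix_add_ldistrib trace_add matrix_scalar_ac trace_scaleR trace_matrix_mult_emat)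

lemma a2_add_emat:
  "a2 \<gamma> (H + t *\<^sub>R emat i j)
     = a2 \<gamma> H + 2 * t * (\<gamma> ** H ** \<gamma>) $ j $ i + t\<^sup>2 * a2 \<gamma> (emat i j)"
proof -
  let ?E = "emat i j"
  have "\<gamma> ** (H + t *\<^sub>R ?E) ** \<gamma> ** (H + t *\<^sub>R ?E)
      = \<gamma> ** H ** \<gamma> ** H + t *\<^sub>R (\<gamma> ** H ** \<gamma> ** ?E) + t *\<^sub>R (\<gamma> ** ?E ** \<gamma> ** H)
        + t\<^sup>2 *\<^sub>R (\<gamma> ** ?E ** \<gamma> ** ?E)"
    by (simp add: matrix_add_ldistrib matrix_add_rdistrib matrix_scalar_ac
        scalar_matrix_assoc[symmetric] power2_eq_square algebra_simps)
  moreover have "trace (\<gamma> ** ?E ** \<gamma> ** H) = trace (\<gamma> ** H ** \<gamma> ** ?E)"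
    by (metis matrix_mul_assoc trace_mul_sym)
  ultimately show ?thesis
    unfolding a2_def by (simp add: trace_add trace_scaleR trace_matrix_mult_emat)
qed

lemma a1_directional_derivative:
  "((\<lambda>t. a1 \<gamma> (H + t *\<^sub>R emat i j)) has_real_derivative \<gamma> $ j $ i) (at 0)"
  unfolding a1_add_emat by (auto intro!: derivative_eq_intros)

lemma a2_directional_derivative:
  "((\<lambda>t. a2 \<gamma> (H + t *\<^sub>R emat i j)) has_real_derivative 2 * (\<gamma> ** H ** \<gamma>) $ j $ i) (at 0)"
  unfolding a2_add_emat by (auto intro!: derivative_eq_intros)

lemma stationary_iff_derivatives_zero:
  assumes "\<And>i j. ((\<lambda>t. L (H + t *\<^sub>R emat i j)) has_real_derivative D i j) (at 0)"
  shows "stationary L H \<longleftrightarrow> (\<forall>i j. D i j = 0)"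
  unfolding stationary_def using assms DERIV_unique by metis

lemma LagD_directional_derivative:
  assumes f_C1: "\<And>x y. ((\<lambda>(u, v). f u v) has_derivative
                 (\<lambda>(du, dv). f1 x y * du + f2 x y * dv)) (at (x, y))"
  shows "((\<lambda>t. LagD f \<gamma> (H + t *\<^sub>R emat i j)) has_real_derivative
     sqrt \<bar>det \<gamma>\<bar> * (f1 (a1 \<gamma> H) (a2 \<gamma> H) * \<gamma> $ j $ i
       + f2 (a1 \<gamma> H) (a2 \<gamma> H) * (2 * (\<gamma> ** H ** \<gamma>) $ j $ i))) (at 0)"
proof -
  let ?A = "\<lambda>t. (a1 \<gamma> (H + t *\<^sub>R emat i j), a2 \<gamma> (H + t *\<^sub>R emat i j))"
  have "(?A has_derivative (\<lambda>t. (t * \<gamma> $ j $ i, t * (2 * (\<gamma> ** H ** \<gamma>) $ j $ i)))) (at 0)"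
    using has_derivative_Pair[OF a1_directional_derivative[unfolded has_field_derivative_def]
        a2_directional_derivative[unfolded has_field_derivative_def]]
    by (simp add: mult.commute)
  note chain = has_derivative_in_compose2[OF f_C1[of "fst p" "snd p" for p, simplified]
      subset_UNIV UNIV_I this]
  have "((\<lambda>t. f (a1 \<gamma> (H + t *\<^sub>R emat i j)) (a2 \<gamma> (H + t *\<^sub>R emat i j))) has_real_derivative
     f1 (a1 \<gamma> H) (a2 \<gamma> H) * \<gamma> $ j $ i + f2 (a1 \<gamma> H) (a2 \<gamma> H) * (2 * (\<gamma> ** H ** \<gamma>) $ j $ i)) (at 0)"
    unfolding has_field_derivative_def
    by (rule has_derivative_eq_rhs[OF chain[simplified]]) (simp add: fun_eq_iff algebra_simps)
  then show ?thesis unfolding LagD_def by (rule DERIV_cmult)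
qed

lemma LagDW_directional_derivative:
  assumes g_C1: "\<And>x. (g has_real_derivative g' x) (at x)"
    and a1_nz: "a1 \<gamma> H \<noteq> 0"
  shows "((\<lambda>t. LagDW g \<gamma> (H + t *\<^sub>R emat i j)) has_real_derivative
     sqrt \<bar>det \<gamma>\<bar> * g' (a2 \<gamma> H / (a1 \<gamma> H)\<^sup>2)
       * (2 / (a1 \<gamma> H)\<^sup>2 * ((\<gamma> ** H ** \<gamma>) $ j $ i - a2 \<gamma> H / a1 \<gamma> H * \<gamma> $ j $ i))) (at 0)"
proof -
  have ratio: "((\<lambda>t. a2 \<gamma> (H + t *\<^sub>R emat i j) / (a1 \<gamma> (H + t *\<^sub>R emat i j))\<^sup>2) has_real_derivative
     2 / (a1 \<gamma> H)\<^sup>2 * ((\<gamma> ** H ** \<gamma>) $ j $ i - a2 \<gamma> H / a1 \<gamma> H * \<gamma> $ j $ i)) (at 0)"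
    by (rule DERIV_divide[OF a2_directional_derivative DERIV_power[OF a1_directional_derivative],
          THEN DERIV_cong]) (simp_all add: a1_nz field_simps power2_eq_square)
  show ?thesis
    unfolding LagDW_def mult.assoc by (rule DERIV_cmult) (use DERIV_chain2[OF g_C1 ratio] in simp)
qed

lemma matrix_eq_0_iff_entries: "(\<forall>i j. M $ j $ i = 0) \<longleftrightarrow> M = (0::real^'n^'m)"
  by (auto simp: vec_eq_iff)

lemma stationary_LagD_iff:
  assumes f_C1: "\<And>x y. ((\<lambda>(u, v). f u v) has_derivative
                 (\<lambda>(du, dv). f1 x y * du + f2 x y * dv)) (at (x, y))"
    and "invertible \<gamma>"
  shows "stationary (LagD f \<gamma>) H \<longleftrightarrow>
    f1 (a1 \<gamma> H) (a2 \<gamma> H) *\<^sub>R \<gamma> + (2 * f2 (a1 \<gamma> H) (a2 \<gamma> H)) *\<^sub>R (\<gamma> ** H ** \<gamma>) = 0"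
    (is "_ \<longleftrightarrow> ?M = 0")
proof -
  have "sqrt \<bar>det \<gamma>\<bar> \<noteq> 0" using assms(2) by (simp add: invertible_det_nz)
  then have "stationary (LagD f \<gamma>) H \<longleftrightarrow> (\<forall>i j. ?M $ j $ i = 0)"
    unfolding stationary_iff_derivatives_zero[OF LagD_directional_derivative[OF f_C1]]
    by (simp add: mult_ac)
  then show ?thesis by (simp only: matrix_eq_0_iff_entries)
qed

lemma stationary_LagDW_iff:
  assumes g_C1: "\<And>x. (g has_real_derivative g' x) (at x)"
    and "invertible \<gamma>" and "a1 \<gamma> H \<noteq> 0"
  shows "stationary (LagDW g \<gamma>) H \<longleftrightarrow>
    g' (a2 \<gamma> H / (a1 \<gamma> H)\<^sup>2) = 0 \<or> \<gamma> ** H ** \<gamma> = (a2 \<gamma> H / a1 \<gamma> H) *\<^sub>R \<gamma>"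
proof -
  let ?M = "\<gamma> ** H ** \<gamma> - (a2 \<gamma> H / a1 \<gamma> H) *\<^sub>R \<gamma>"
  have "sqrt \<bar>det \<gamma>\<bar> \<noteq> 0" using assms(2) by (simp add: invertible_det_nz)
  then have "stationary (LagDW g \<gamma>) H \<longleftrightarrow> g' (a2 \<gamma> H / (a1 \<gamma> H)\<^sup>2) = 0 \<or> (\<forall>i j. ?M $ j $ i = 0)"
    unfolding stationary_iff_derivatives_zero[OF LagDW_directional_derivative[OF g_C1 assms(3)]]
    using assms(3) by (auto simp: field_simps)
  then show ?thesis by (simp only: matrix_eq_0_iff_entries right_minus_eq)
qed

lemma a1_matrix_inv_scaleR:
  assumes "\<phi> \<noteq> 0" and "invertible \<gamma>"
  shows "a1 \<gamma> (matrix_inv (\<phi> *\<^sub>R \<gamma>)) = 2 / \<phi>"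
  unfolding a1_def matrix_mult_matrix_inv_scaleR[OF assms]
  by (simp add: trace_scaleR trace_I divide_inverse)

lemma a2_matrix_inv_scaleR:
  assumes "\<phi> \<noteq> 0" and "invertible \<gamma>"
  shows "a2 \<gamma> (matrix_inv (\<phi> *\<^sub>R \<gamma>)) = 2 / \<phi>\<^sup>2"
proof -
  let ?H = "matrix_inv (\<phi> *\<^sub>R \<gamma>)"
  have "\<gamma> ** ?H ** \<gamma> ** ?H = (\<gamma> ** ?H) ** (\<gamma> ** ?H)" by (simp add: matrix_mul_assoc)
  also have "\<dots> = inverse (\<phi>\<^sup>2) *\<^sub>R mat 1"
    by (simp add: matrix_mult_matrix_inv_scaleR[OF assms] matrix_scalar_ac
        scalar_matrix_assoc[symmetric] power2_eq_square)
  finally show ?thesis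
    unfolding a2_def by (simp add: trace_scaleR trace_I divide_inverse)
qed

lemma LagD_stationary_solution:
  assumes f_C1: "\<And>x y. ((\<lambda>(u, v). f u v) has_derivative
                 (\<lambda>(du, dv). f1 x y * du + f2 x y * dv)) (at (x, y))"
    and \<gamma>_inv: "invertible \<gamma>" and h_inv: "invertible h"
    and stat: "stationary (LagD f \<gamma>) (matrix_inv h)"
    and f1_nz: "f1 (a1 \<gamma> (matrix_inv h)) (a2 \<gamma> (matrix_inv h)) \<noteq> 0"
  shows "\<exists>\<phi>. \<phi> \<noteq> 0 \<and> h = \<phi> *\<^sub>R \<gamma>
           \<and> \<phi> = - 2 * f2 (2 / \<phi>) (2 / \<phi>\<^sup>2) / f1 (2 / \<phi>) (2 / \<phi>\<^sup>2)
           \<and> LagD f \<gamma> (matrix_inv h) = f (2 / \<phi>) (2 / \<phi>\<^sup>2) * sqrt \<bar>det \<gamma>\<bar>"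
proof -
  define H where "H = matrix_inv h"
  define F1 where "F1 = f1 (a1 \<gamma> H) (a2 \<gamma> H)"
  define F2 where "F2 = f2 (a1 \<gamma> H) (a2 \<gamma> H)"
  have "F1 \<noteq> 0" using f1_nz unfolding F1_def H_def .
  have EL: "- (F1 *\<^sub>R \<gamma>) = (2 * F2) *\<^sub>R (\<gamma> ** H ** \<gamma>)"
    using stat stationary_LagD_iff[OF f_C1 \<gamma>_inv] unfolding F1_def F2_def H_def
    by (simp add: neg_eq_iff_add_eq_0)
  have "F2 \<noteq> 0"
  proof
    assume "F2 = 0"
    with EL \<open>F1 \<noteq> 0\<close> have "\<gamma> = 0" by simp
    with invertible_nonzero[OF \<gamma>_inv] show False ..
  qed
  have "\<gamma> ** H ** \<gamma> = inverse (2 * F2) *\<^sub>R ((2 * F2) *\<^sub>R (\<gamma> ** H ** \<gamma>))"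
    using \<open>F2 \<noteq> 0\<close> by simp
  also have "\<dots> = (- F1 / (2 * F2)) *\<^sub>R \<gamma>"
    unfolding EL[symmetric] by (simp add: field_simps)
  finally have "\<gamma> ** matrix_inv h ** \<gamma> = (- F1 / (2 * F2)) *\<^sub>R \<gamma>" unfolding H_def .
  from proportional_if_sandwich_scaleR[OF \<gamma>_inv h_inv this]
  have h: "h = (- 2 * F2 / F1) *\<^sub>R \<gamma>" by simp
  define \<phi> where "\<phi> = - 2 * F2 / F1"
  have "\<phi> \<noteq> 0" using \<open>F1 \<noteq> 0\<close> \<open>F2 \<noteq> 0\<close> unfolding \<phi>_def by simp
  have a1: "a1 \<gamma> H = 2 / \<phi>" and a2: "a2 \<gamma> H = 2 / \<phi>\<^sup>2"
    unfolding H_def h \<phi>_def[symmetric]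
    using a1_matrix_inv_scaleR a2_matrix_inv_scaleR \<open>\<phi> \<noteq> 0\<close> \<gamma>_inv by blast+
  show ?thesis
  proof (intro exI conjI)
    show "\<phi> \<noteq> 0" and "h = \<phi> *\<^sub>R \<gamma>" using \<open>\<phi> \<noteq> 0\<close> h unfolding \<phi>_def by simp_all
    show "\<phi> = - 2 * f2 (2 / \<phi>) (2 / \<phi>\<^sup>2) / f1 (2 / \<phi>) (2 / \<phi>\<^sup>2)"
      using \<phi>_def unfolding F1_def F2_def a1 a2 .
    show "LagD f \<gamma> (matrix_inv h) = f (2 / \<phi>) (2 / \<phi>\<^sup>2) * sqrt \<bar>det \<gamma>\<bar>"
      unfolding LagD_def H_def[symmetric] a1 a2 by (rule mult.commute)
  qed
qed

lemma LagDW_stationary_at_proportional: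
  assumes g_C1: "\<And>x. (g has_real_derivative g' x) (at x)"
    and \<gamma>_inv: "invertible \<gamma>" and "\<phi> \<noteq> 0"
  shows "stationary (LagDW g \<gamma>) (matrix_inv (\<phi> *\<^sub>R \<gamma>))"
    and "LagDW g \<gamma> (matrix_inv (\<phi> *\<^sub>R \<gamma>)) = g (1/2) * sqrt \<bar>det \<gamma>\<bar>"
proof -
  let ?H = "matrix_inv (\<phi> *\<^sub>R \<gamma>)"
  have a1: "a1 \<gamma> ?H = 2 / \<phi>" and a2: "a2 \<gamma> ?H = 2 / \<phi>\<^sup>2"
    using a1_matrix_inv_scaleR a2_matrix_inv_scaleR \<open>\<phi> \<noteq> 0\<close> \<gamma>_inv by blast+
  have "\<gamma> ** ?H ** \<gamma> = inverse \<phi> *\<^sub>R \<gamma>"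
    by (simp add: matrix_mult_matrix_inv_scaleR[OF \<open>\<phi> \<noteq> 0\<close> \<gamma>_inv] scalar_matrix_assoc[symmetric])
  also have "inverse \<phi> = a2 \<gamma> ?H / a1 \<gamma> ?H"
    unfolding a1 a2 using \<open>\<phi> \<noteq> 0\<close> by (simp add: field_simps power2_eq_square)
  finally show "stationary (LagDW g \<gamma>) ?H"
    using stationary_LagDW_iff[OF g_C1 \<gamma>_inv] a1 \<open>\<phi> \<noteq> 0\<close> by simp
  have "a2 \<gamma> ?H / (a1 \<gamma> ?H)\<^sup>2 = 1/2"
    unfolding a1 a2 using \<open>\<phi> \<noteq> 0\<close> by (simp add: field_simps power2_eq_square)
  then show "LagDW g \<gamma> ?H = g (1/2) * sqrt \<bar>det \<gamma>\<bar>"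
    unfolding LagDW_def by (simp only: mult.commute)
qed

lemma LagDW_stationary_solution:
  assumes g_C1: "\<And>x. (g has_real_derivative g' x) (at x)"
    and \<gamma>_inv: "invertible \<gamma>" and h_inv: "invertible h"
    and stat: "stationary (LagDW g \<gamma>) (matrix_inv h)"
    and a1_nz: "a1 \<gamma> (matrix_inv h) \<noteq> 0"
    and g'_nz: "g' (a2 \<gamma> (matrix_inv h) / (a1 \<gamma> (matrix_inv h))\<^sup>2) \<noteq> 0"
  shows "\<exists>\<phi>. \<phi> \<noteq> 0 \<and> h = \<phi> *\<^sub>R \<gamma>"
proof -
  have "\<gamma> ** matrix_inv h ** \<gamma> = (a2 \<gamma> (matrix_inv h) / a1 \<gamma> (matrix_inv h)) *\<^sub>R \<gamma>"
    using stat g'_nz stationary_LagDW_iff[OF g_C1 \<gamma>_inv a1_nz] by blast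
  from proportional_if_sandwich_scaleR[OF \<gamma>_inv h_inv this] show ?thesis
    using inverse_nonzero_iff_nonzero by blast
qed

theorem mainTheorem8:
  fixes \<gamma> :: "real^2^2"
    and f f1 f2 :: "real \<Rightarrow> real \<Rightarrow> real"
    and g g' :: "real \<Rightarrow> real"
  assumes gsym: "transpose \<gamma> = \<gamma>"
    and ginv: "invertible \<gamma>"
    and f_C1: "\<And>x y. ((\<lambda>(u, v). f u v) has_derivative
                 (\<lambda>(du, dv). f1 x y * du + f2 x y * dv)) (at (x, y))"
    and f1_cont: "continuous_on UNIV (\<lambda>(u, v). f1 u v)"
    and f2_cont: "continuous_on UNIV (\<lambda>(u, v). f2 u v)"
    and g_C1: "\<And>x. (g has_real_derivative g' x) (at x)"
    and g'_cont: "continuous_on UNIV g'"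
  shows
    "(\<forall>h :: real^2^2. transpose h = h \<and> invertible h
        \<and> stationary (LagD f \<gamma>) (matrix_inv h)
        \<and> f1 (a1 \<gamma> (matrix_inv h)) (a2 \<gamma> (matrix_inv h)) \<noteq> 0
        \<longrightarrow> (\<exists>\<phi>. \<phi> \<noteq> 0 \<and> h = \<phi> *\<^sub>R \<gamma>
               \<and> \<phi> = - 2 * f2 (2 / \<phi>) (2 / \<phi>^2) / f1 (2 / \<phi>) (2 / \<phi>^2)
               \<and> LagD f \<gamma> (matrix_inv h) = f (2 / \<phi>) (2 / \<phi>^2) * sqrt \<bar>det \<gamma>\<bar>))
     \<and> (\<forall>\<phi>::real. \<phi> \<noteq> 0 \<longrightarrow>
          stationary (LagDW g \<gamma>) (matrix_inv (\<phi> *\<^sub>R \<gamma>))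
          \<and> LagDW g \<gamma> (matrix_inv (\<phi> *\<^sub>R \<gamma>)) = g (1/2) * sqrt \<bar>det \<gamma>\<bar>)
     \<and> (\<forall>h :: real^2^2. transpose h = h \<and> invertible h
        \<and> stationary (LagDW g \<gamma>) (matrix_inv h)
        \<and> a1 \<gamma> (matrix_inv h) \<noteq> 0
        \<and> g' (a2 \<gamma> (matrix_inv h) / (a1 \<gamma> (matrix_inv h))^2) \<noteq> 0
        \<longrightarrow> (\<exists>\<phi>. \<phi> \<noteq> 0 \<and> h = \<phi> *\<^sub>R \<gamma>))"
  using LagD_stationary_solution[OF f_C1 ginv] LagDW_stationary_at_proportional[OF g_C1 ginv]
    LagDW_stationary_solution[OF g_C1 ginv]
  by blast

end
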